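(* Let $\pi$ be a stationary deterministic memoryless policy, $\hat q:\mathcal{S}\times\mathcal{A}\to\mathbb{R}$, $\omega>0$, $\Delta\ge0$, $\mathcal{S}_{\text{fix}}\subseteq\mathcal{S}$, and $\pi'=\pi_{\hat q,\pi,\mathcal{S}_{\text{fix}}}$. Assume $|\hat q(s,a)-q^\pi(s,a)|\le\omega$ for all $s\in\mathcal{S}\setminus\mathcal{S}_{\text{fix}}$ and $a\in\mathcal{A}$, and that $\pi$ is next-state $\Delta$-optimal on $\mathcal{S}\setminus\mathcal{S}_{\text{fix}}$. Then $\pi'$ is $(4\omega+\gamma\Delta)$-optimal on $\mathcal{S}\setminus\mathcal{S}_{\text{fix}}$.
   Context: An MDP is $M=(\mathcal{S},\mathcal{A},\mathcal{Q})$ with measurable state space $\mathcal{S}$, finite action set $\mathcal{A}=(\mathcal{A}_1,\dots,\mathcal{A}_{|\mathcal{A}|})$ (with a fixed ordering), and transition-reward kernel $\mathcal{Q}$ with marginals $P(\cdot|s,a)$ (next state) and reward distribution supported on $[0,1]$, $r(s,a)$ the mean reward; discount $\gamma\in(0,1)$. $v^\pi(s)=\mathbb{E}_{\pi,s}[\sum_{t\ge0}\gamma^tR_t]$, $q^\pi(s,a)=\mathbb{E}_{\pi,s,a}[\sum_{t\ge0}\gamma^tR_t]$; $v^\star=\sup_\pi v^\pi$ (attained by a stationary deterministic policy). A policy $\pi$ is $\Delta$-optimal on $\mathcal{S}'\subseteq\mathcal{S}$ if $v^\star(s)-v^\pi(s)\le\Delta$ for all $s\in\mathcal{S}'$; it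 is next-state $\Delta$-optimal on $\mathcal{S}'$ if $\int(v^\star(s')-v^\pi(s'))\,dP(s'|s,a)\le\Delta$ for all $s\in\mathcal{S}'$, $a\in\mathcal{A}$. CAPI update: $\pi_{\hat q,\pi,\mathcal{S}_{\text{fix}}}(s)=\arg\max_{a}\hat q(s,a)$ (ties broken by smallest index) if $s\notin\mathcal{S}_{\text{fix}}$ and $\hat q(s,\pi(s))+\omega<\max_a\hat q(s,a)-\omega$, and $=\pi(s)$ otherwise. *)

theory Defs
  imports "HOL-Probability.Probability"
begin

text \<open>MDP data: state space S (a measure space, only its sigma-algebra matters),
 finite linearly ordered action type 'a (the order is the fixed action ordering),
 transition kernel P s a (a probability measure on S), mean reward r s a,
 discount gamma.\<close>

definition stationary_policies :: "'s measure \<Rightarrow> ('s \<Rightarrow> 'a) set" where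
  "stationary_policies S = S \<rightarrow>\<^sub>M count_space UNIV"

definition Ppol :: "('s \<Rightarrow> 'a \<Rightarrow> 's measure) \<Rightarrow> ('s \<Rightarrow> 'a) \<Rightarrow> ('s \<Rightarrow> real) \<Rightarrow> 's \<Rightarrow> real" where
  "Ppol P p f s = integral\<^sup>L (P s (p s)) f"

text \<open>v^p(s) = sum_t gamma^t E_{p,s}[R_t], with E_{p,s}[R_t] = (P_pi^t r_pi)(s).\<close>
definition v_pol :: "('s \<Rightarrow> 'a \<Rightarrow> 's measure) \<Rightarrow> ('s \<Rightarrow> 'a \<Rightarrow> real) \<Rightarrow> real \<Rightarrow> ('s \<Rightarrow> 'a) \<Rightarrow> 's \<Rightarrow> real" where
  "v_pol P r \<gamma> p s = (\<Sum>t. \<gamma> ^ t * ((Ppol P p ^^ t) (\<lambda>s'. r s' (p s')) s))"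

definition q_pol :: "('s \<Rightarrow> 'a \<Rightarrow> 's measure) \<Rightarrow> ('s \<Rightarrow> 'a \<Rightarrow> real) \<Rightarrow> real \<Rightarrow> ('s \<Rightarrow> 'a) \<Rightarrow> 's \<Rightarrow> 'a \<Rightarrow> real" where
  "q_pol P r \<gamma> p s a = r s a + \<gamma> * integral\<^sup>L (P s a) (v_pol P r \<gamma> p)"

definition v_star :: "'s measure \<Rightarrow> ('s \<Rightarrow> 'a \<Rightarrow> 's measure) \<Rightarrow> ('s \<Rightarrow> 'a \<Rightarrow> real) \<Rightarrow> real \<Rightarrow> 's \<Rightarrow> real" where
  "v_star S P r \<gamma> s = (SUP p\<in>stationary_policies S. v_pol P r \<gamma> p s)"

definition delta_optimal_on ::
  "'s measure \<Rightarrow> ('s \<Rightarrow> 'a \<Rightarrow> 's measure) \<Rightarrow> ('s \<Rightarrow> 'a \<Rightarrow> real) \<Rightarrow> real \<Rightarrow> ('s \<Rightarrow> 'a) \<Rightarrow> real \<Rightarrow> 's set \<Rightarrow> bool" where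
  "delta_optimal_on S P r \<gamma> p \<Delta> S' \<longleftrightarrow>
     (\<forall>s\<in>S'. v_star S P r \<gamma> s - v_pol P r \<gamma> p s \<le> \<Delta>)"

definition next_state_delta_optimal_on ::
  "'s measure \<Rightarrow> ('s \<Rightarrow> 'a \<Rightarrow> 's measure) \<Rightarrow> ('s \<Rightarrow> 'a \<Rightarrow> real) \<Rightarrow> real \<Rightarrow> ('s \<Rightarrow> 'a) \<Rightarrow> real \<Rightarrow> 's set \<Rightarrow> bool" where
  "next_state_delta_optimal_on S P r \<gamma> p \<Delta> S' \<longleftrightarrow>
     (\<forall>s\<in>S'. \<forall>a. integral\<^sup>L (P s a) (\<lambda>s'. v_star S P r \<gamma> s' - v_pol P r \<gamma> p s') \<le> \<Delta>)"

definition capi_update ::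
  "('s \<Rightarrow> 'a::{finite,linorder} \<Rightarrow> real) \<Rightarrow> ('s \<Rightarrow> 'a) \<Rightarrow> 's set \<Rightarrow> real \<Rightarrow> 's \<Rightarrow> 'a" where
  "capi_update qh p Sfix \<omega> s =
     (if s \<notin> Sfix \<and> qh s (p s) + \<omega> < Max (range (qh s)) - \<omega>
      then (LEAST a. qh s a = Max (range (qh s)))
      else p s)"

end

theory Submission
  imports Defs
begin

text \<open>Against the true action values \<open>q\<^sup>\<pi>\<close>, the CAPI step never picks a worse action than
  \<open>\<pi>\<close> and, off \<open>S\<^sub>f\<^sub>i\<^sub>x\<close>, loses at most \<open>4\<omega>\<close> against any action. The first fact is a policy
  improvement condition, so \<open>v\<^sup>\<pi> \<le> v\<^sup>\<pi>'\<close> everywhere and hence \<open>q\<^sup>\<pi>(s,\<pi>'(s)) \<le> v\<^sup>\<pi>'(s)\<close>.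
  For an optimal stationary \<open>\<pi>\<^sup>*\<close>, \<open>v\<^sup>*(s) = q\<^sup>\<pi>\<^sup>*(s,\<pi>\<^sup>*(s))\<close> exceeds \<open>q\<^sup>\<pi>(s,\<pi>\<^sup>*(s))\<close> by \<open>\<gamma>\<close> times
  the next-state gap \<open>\<integral>(v\<^sup>* - v\<^sup>\<pi>) dP \<le> \<Delta>\<close>; chaining the three estimates gives the bound.\<close>

lemma
  fixes Q :: "'a::{finite,linorder} \<Rightarrow> bool"
  assumes "\<exists>a. Q a"
  shows LeastI_finite: "Q (LEAST a. Q a)"
    and not_less_Least_finite: "b < (LEAST a. Q a) \<Longrightarrow> \<not> Q b"
proof -
  have Least_eq: "(LEAST a. Q a) = Min {a. Q a}" by (rule Least_Min) (use assms in auto)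
  show "Q (LEAST a. Q a)" unfolding Least_eq using Min_in[of "{a. Q a}"] assms by auto
  show "b < (LEAST a. Q a) \<Longrightarrow> \<not> Q b"
    unfolding Least_eq using Min_le[of "{a. Q a}" b] by (auto simp: not_le[symmetric])
qed

lemma measurable_Least_finite:
  fixes Q :: "'a::{finite,linorder} \<Rightarrow> 's \<Rightarrow> bool"
  assumes Q_pred: "\<And>a. Measurable.pred M (Q a)" and Q_ex: "\<And>x. x \<in> space M \<Longrightarrow> \<exists>a. Q a x"
  shows "(\<lambda>x. LEAST a. Q a x) \<in> M \<rightarrow>\<^sub>M count_space UNIV"
proof (subst measurable_count_space_eq2[OF finite], intro conjI ballI)
  show "(\<lambda>x. LEAST a. Q a x) \<in> space M \<rightarrow> UNIV" by simp
  fix b :: 'a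
  have "(\<lambda>x. LEAST a. Q a x) -` {b} \<inter> space M = {x\<in>space M. Q b x \<and> (\<forall>a\<in>{..<b}. \<not> Q a x)}"
  proof (intro set_eqI iffI)
    fix x assume "x \<in> (\<lambda>x. LEAST a. Q a x) -` {b} \<inter> space M"
    then have x: "x \<in> space M" and b: "(LEAST a. Q a x) = b" by auto
    have "Q b x" using LeastI_finite[OF Q_ex[OF x]] b by simp
    moreover have "\<not> Q a x" if "a < b" for a using not_less_Least_finite[OF Q_ex[OF x]] that b by simp
    ultimately show "x \<in> {x\<in>space M. Q b x \<and> (\<forall>a\<in>{..<b}. \<not> Q a x)}" using x by auto
  next
    fix x assume x: "x \<in> {x\<in>space M. Q b x \<and> (\<forall>a\<in>{..<b}. \<not> Q a x)}"
    have "(LEAST a. Q a x) = b"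
      by (rule Least_equality) (use x in \<open>auto simp: not_less[symmetric]\<close>)
    then show "x \<in> (\<lambda>x. LEAST a. Q a x) -` {b} \<inter> space M" using x by auto
  qed
  also have "\<dots> \<in> sets M"
    using Q_pred[measurable] by measurable
  finally show "(\<lambda>x. LEAST a. Q a x) -` {b} \<inter> space M \<in> sets M" .
qed

locale discounted_mdp =
  fixes S :: "'s measure"
    and P :: "'s \<Rightarrow> 'a::countable \<Rightarrow> 's measure"
    and r :: "'s \<Rightarrow> 'a \<Rightarrow> real"
    and \<gamma> :: real
  assumes kernel: "\<And>a. (\<lambda>s. P s a) \<in> S \<rightarrow>\<^sub>M prob_algebra S"
    and r_measurable: "\<And>a. (\<lambda>s. r s a) \<in> borel_measurable S"
    and r_bounds: "\<And>s a. 0 \<le> r s a \<and> r s a \<le> 1"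
    and gamma_pos: "0 < \<gamma>" and gamma_less_1: "\<gamma> < 1"
begin

lemma prob_space_P: "s \<in> space S \<Longrightarrow> prob_space (P s a)"
  and sets_P: "s \<in> space S \<Longrightarrow> sets (P s a) = sets S"
  using measurable_space[OF kernel[of a]] by (auto simp: space_prob_algebra)

lemma space_P: "s \<in> space S \<Longrightarrow> space (P s a) = space S"
  using sets_P sets_eq_imp_space_eq by blast

lemma measurable_P: "s \<in> space S \<Longrightarrow> f \<in> borel_measurable S \<Longrightarrow> f \<in> borel_measurable (P s a)"
  using sets_P measurable_cong_sets by blast

lemma integrable_P_bounded:
  fixes f :: "'s \<Rightarrow> real"
  assumes s: "s \<in> space S" and f: "f \<in> borel_measurable S"
    and bound: "\<And>x. x \<in> space S \<Longrightarrow> \<bar>f x\<bar> \<le> B"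
  shows "integrable (P s a) f"
proof -
  interpret prob_space "P s a" using prob_space_P[OF s] .
  show ?thesis
    by (rule integrable_const_bound[where B=B]) (auto simp: space_P[OF s] bound measurable_P[OF s f])
qed

lemma integral_P_bounds:
  fixes f :: "'s \<Rightarrow> real"
  assumes s: "s \<in> space S" and f: "f \<in> borel_measurable S"
    and bounds: "\<And>x. x \<in> space S \<Longrightarrow> lo \<le> f x \<and> f x \<le> hi"
  shows "lo \<le> integral\<^sup>L (P s a) f \<and> integral\<^sup>L (P s a) f \<le> hi"
proof -
  interpret prob_space "P s a" using prob_space_P[OF s] .
  have int: "integrable (P s a) f"
    by (rule integrable_P_bounded[OF s f, where B="\<bar>lo\<bar> + \<bar>hi\<bar>"]) (use bounds in force)
  have "AE x in P s a. lo \<le> f x" "AE x in P s a. f x \<le> hi"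
    using bounds by (auto simp: space_P[OF s])
  then show ?thesis
    using integral_ge_const[OF int] integral_le_const[OF int] by auto
qed

lemma measurable_integral_P:
  fixes f :: "'s \<Rightarrow> real"
  assumes "f \<in> borel_measurable S"
  shows "(\<lambda>s. integral\<^sup>L (P s a) f) \<in> borel_measurable S"
  by (rule measurable_compose[OF measurable_prob_algebraD[OF kernel]
        integral_measurable_subprob_algebra[OF assms]])

lemma measurable_Ppol:
  "p \<in> stationary_policies S \<Longrightarrow> f \<in> borel_measurable S \<Longrightarrow> Ppol P p f \<in> borel_measurable S"
  unfolding Ppol_def stationary_policies_def
  by (rule measurable_compose_countable[where f="\<lambda>a s. integral\<^sup>L (P s a) f"])
     (erule measurable_integral_P)

lemma measurable_reward_policy:
  "p \<in> stationary_policies S \<Longrightarrow> (\<lambda>s. r s (p s)) \<in> borel_measurable S"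
  unfolding stationary_policies_def
  by (rule measurable_compose_countable[where f="\<lambda>a s. r s a"]) (rule r_measurable)

definition expected_reward :: "('s \<Rightarrow> 'a) \<Rightarrow> nat \<Rightarrow> 's \<Rightarrow> real" where
  "expected_reward p t = (Ppol P p ^^ t) (\<lambda>s. r s (p s))"

lemma v_pol_eq_suminf: "v_pol P r \<gamma> p s = (\<Sum>t. \<gamma> ^ t * expected_reward p t s)"
  unfolding v_pol_def expected_reward_def ..

lemma expected_reward_0: "expected_reward p 0 s = r s (p s)"
  by (simp add: expected_reward_def)

lemma expected_reward_Suc:
  "expected_reward p (Suc t) s = integral\<^sup>L (P s (p s)) (expected_reward p t)"
  by (simp add: expected_reward_def Ppol_def)

lemma expected_reward_measurable_bounded:
  assumes p: "p \<in> stationary_policies S"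
  shows "expected_reward p t \<in> borel_measurable S \<and>
    (\<forall>s\<in>space S. 0 \<le> expected_reward p t s \<and> expected_reward p t s \<le> 1)"
proof (induction t)
  case 0
  show ?case using measurable_reward_policy[OF p] r_bounds by (auto simp: expected_reward_def)
next
  case (Suc t)
  have "expected_reward p (Suc t) = Ppol P p (expected_reward p t)"
    by (simp add: expected_reward_def)
  moreover have "0 \<le> expected_reward p (Suc t) s \<and> expected_reward p (Suc t) s \<le> 1"
    if "s \<in> space S" for s
    unfolding expected_reward_Suc by (rule integral_P_bounds) (use Suc that in auto)
  ultimately show ?case
    using Suc measurable_Ppol[OF p] by auto
qed

lemma norm_discounted_reward_le:
  assumes "p \<in> stationary_policies S" "s \<in> space S"
  shows "norm (\<gamma> ^ t * expected_reward p t s) \<le> \<gamma> ^ t"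
  using expected_reward_measurable_bounded[OF assms(1), of t] assms(2) gamma_pos
  by (auto simp: abs_mult mult_left_le)

lemma summable_norm_discounted_reward:
  assumes "p \<in> stationary_policies S" "s \<in> space S"
  shows "summable (\<lambda>t. norm (\<gamma> ^ t * expected_reward p t s))"
  by (rule summable_comparison_test[where g="\<lambda>t. \<gamma> ^ t"])
     (use norm_discounted_reward_le[OF assms] gamma_pos gamma_less_1 in auto)

lemma v_pol_measurable: "p \<in> stationary_policies S \<Longrightarrow> v_pol P r \<gamma> p \<in> borel_measurable S"
  unfolding v_pol_eq_suminf[abs_def]
  using expected_reward_measurable_bounded
  by (intro borel_measurable_suminf borel_measurable_times) auto

lemma v_pol_bounds:
  assumes p: "p \<in> stationary_policies S" and s: "s \<in> space S"
  shows "0 \<le> v_pol P r \<gamma> p s \<and> v_pol P r \<gamma> p s \<le> 1 / (1 - \<gamma>)"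
proof -
  have geom: "(\<lambda>t. \<gamma> ^ t) sums (1 / (1 - \<gamma>))"
    using geometric_sums[of \<gamma>] gamma_pos gamma_less_1 by auto
  have summ: "summable (\<lambda>t. \<gamma> ^ t * expected_reward p t s)"
    using summable_norm_discounted_reward[OF p s] by (rule summable_norm_cancel)
  have "0 \<le> \<gamma> ^ t * expected_reward p t s" "\<gamma> ^ t * expected_reward p t s \<le> \<gamma> ^ t" for t
    using expected_reward_measurable_bounded[OF p, of t] s gamma_pos
      norm_discounted_reward_le[OF p s, of t] by auto
  then show ?thesis
    unfolding v_pol_eq_suminf
    using suminf_nonneg[OF summ] suminf_le[OF _ summ sums_summable[OF geom]] sums_unique[OF geom]
    by auto
qed

lemma integrable_v_pol:
  assumes "p \<in> stationary_policies S" "s \<in> space S"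
  shows "integrable (P s a) (v_pol P r \<gamma> p)"
  by (rule integrable_P_bounded[OF assms(2) v_pol_measurable[OF assms(1)], where B="1 / (1 - \<gamma>)"])
     (use v_pol_bounds[OF assms(1)] in \<open>auto simp: abs_le_iff\<close>)

lemma v_pol_bellman:
  assumes p: "p \<in> stationary_policies S" and s: "s \<in> space S"
  shows "v_pol P r \<gamma> p s = r s (p s) + \<gamma> * integral\<^sup>L (P s (p s)) (v_pol P r \<gamma> p)"
proof -
  define M where "M = P s (p s)"
  define f where "f t x = \<gamma> ^ t * expected_reward p t x" for t x
  have f_measurable: "f t \<in> borel_measurable S" for t
    unfolding f_def using expected_reward_measurable_bounded[OF p, of t]
    by (intro borel_measurable_times) auto
  have norm_f_le: "x \<in> space S \<Longrightarrow> norm (f t x) \<le> \<gamma> ^ t" for t x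
    using norm_discounted_reward_le[OF p] by (simp add: f_def)
  have f_integrable: "integrable M (f t)" for t
    unfolding M_def using norm_f_le by (intro integrable_P_bounded[OF s f_measurable]) auto
  have "AE x in M. summable (\<lambda>t. norm (f t x))"
    using summable_norm_discounted_reward[OF p] by (auto simp: M_def space_P[OF s] f_def)
  moreover have "summable (\<lambda>t. integral\<^sup>L M (\<lambda>x. norm (f t x)))"
  proof (rule summable_comparison_test[where g="\<lambda>t. \<gamma> ^ t"])
    have "0 \<le> integral\<^sup>L M (\<lambda>x. norm (f t x)) \<and> integral\<^sup>L M (\<lambda>x. norm (f t x)) \<le> \<gamma> ^ t" for t
      unfolding M_def using f_measurable[of t] norm_f_le
      by (intro integral_P_bounds[OF s]) (auto simp del: real_norm_def)
    then show "\<exists>N. \<forall>t\<ge>N. norm (integral\<^sup>L M (\<lambda>x. norm (f t x))) \<le> \<gamma> ^ t" by auto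
  qed (use gamma_pos gamma_less_1 in auto)
  ultimately have integral_suminf_f: "integral\<^sup>L M (\<lambda>x. \<Sum>t. f t x) = (\<Sum>t. integral\<^sup>L M (f t))"
    and summable_integral_f: "summable (\<lambda>t. integral\<^sup>L M (f t))"
    using integral_suminf[OF f_integrable] summable_integral[OF f_integrable] by auto
  have integral_f: "integral\<^sup>L M (f t) = \<gamma> ^ t * expected_reward p (Suc t) s" for t
    by (simp add: f_def[abs_def] M_def expected_reward_Suc)
  have summable_f: "summable (\<lambda>t. f t s)"
    using summable_norm_discounted_reward[OF p s] unfolding f_def by (rule summable_norm_cancel)
  have "v_pol P r \<gamma> p s = f 0 s + (\<Sum>t. f (Suc t) s)"
    unfolding v_pol_eq_suminf f_def[symmetric] using suminf_split_head[OF summable_f] by simp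
  also have "(\<Sum>t. f (Suc t) s) = \<gamma> * (\<Sum>t. integral\<^sup>L M (f t))"
    using suminf_mult[OF summable_integral_f, of \<gamma>] by (simp add: integral_f f_def mult.assoc)
  also have "(\<Sum>t. integral\<^sup>L M (f t)) = integral\<^sup>L M (v_pol P r \<gamma> p)"
    unfolding integral_suminf_f[symmetric] v_pol_eq_suminf f_def ..
  finally show ?thesis by (simp add: f_def M_def expected_reward_0)
qed

lemma v_pol_eq_q_pol:
  "p \<in> stationary_policies S \<Longrightarrow> s \<in> space S \<Longrightarrow> v_pol P r \<gamma> p s = q_pol P r \<gamma> p s (p s)"
  unfolding q_pol_def by (rule v_pol_bellman)

lemma q_pol_diff:
  assumes "p\<^sub>1 \<in> stationary_policies S" "p\<^sub>2 \<in> stationary_policies S" and s: "s \<in> space S"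
  shows "q_pol P r \<gamma> p\<^sub>1 s a - q_pol P r \<gamma> p\<^sub>2 s a
    = \<gamma> * integral\<^sup>L (P s a) (\<lambda>x. v_pol P r \<gamma> p\<^sub>1 x - v_pol P r \<gamma> p\<^sub>2 x)"
  unfolding q_pol_def
  using Bochner_Integration.integral_diff[OF integrable_v_pol[OF assms(1) s]
      integrable_v_pol[OF assms(2) s]]
  by (simp add: right_diff_distrib)

lemma v_pol_diff_bounds:
  assumes "p\<^sub>1 \<in> stationary_policies S" "p\<^sub>2 \<in> stationary_policies S" "x \<in> space S"
  shows "- (1 / (1 - \<gamma>)) \<le> v_pol P r \<gamma> p\<^sub>1 x - v_pol P r \<gamma> p\<^sub>2 x
    \<and> v_pol P r \<gamma> p\<^sub>1 x - v_pol P r \<gamma> p\<^sub>2 x \<le> 1 / (1 - \<gamma>)"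
  using v_pol_bounds[OF assms(1,3)] v_pol_bounds[OF assms(2,3)] by auto

text \<open>A bounded \<open>d\<close> with \<open>\<gamma> P\<^sub>\<pi> d \<le> d\<close> is nonnegative: its infimum \<open>m\<close> satisfies \<open>\<gamma> m \<le> m\<close>.\<close>

lemma nonneg_if_discounted_Ppol_le:
  fixes d :: "'s \<Rightarrow> real"
  assumes d: "d \<in> borel_measurable S"
    and bounds: "\<And>x. x \<in> space S \<Longrightarrow> - B \<le> d x \<and> d x \<le> B"
    and Ppol_le: "\<And>x. x \<in> space S \<Longrightarrow> \<gamma> * Ppol P p d x \<le> d x"
    and s: "s \<in> space S"
  shows "0 \<le> d s"
proof -
  define m where "m = (INF x\<in>space S. d x)"
  have m_le: "m \<le> d x" if "x \<in> space S" for x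
    unfolding m_def
    by (rule cINF_lower[OF _ that]) (use bounds in \<open>auto intro!: bdd_belowI2[where m="- B"]\<close>)
  have "\<gamma> * m \<le> d x" if x: "x \<in> space S" for x
  proof -
    have "m \<le> Ppol P p d x"
      unfolding Ppol_def using integral_P_bounds[OF x d, of m B] m_le bounds by auto
    then have "\<gamma> * m \<le> \<gamma> * Ppol P p d x" using gamma_pos by simp
    then show ?thesis using Ppol_le[OF x] by linarith
  qed
  then have "\<gamma> * m \<le> m"
    unfolding m_def by (intro cINF_greatest) (use s in auto)
  then have "0 \<le> (1 - \<gamma>) * m" by (simp add: algebra_simps)
  then have "0 \<le> m" using gamma_less_1 by (simp add: zero_le_mult_iff)
  then show ?thesis using m_le[OF s] by simp
qed

lemma policy_improvement:
  assumes p: "p \<in> stationary_policies S" and p': "p' \<in> stationary_policies S"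
    and improving: "\<And>x. x \<in> space S \<Longrightarrow> v_pol P r \<gamma> p x \<le> q_pol P r \<gamma> p x (p' x)"
    and s: "s \<in> space S"
  shows "v_pol P r \<gamma> p s \<le> v_pol P r \<gamma> p' s"
proof -
  define d where "d x = v_pol P r \<gamma> p' x - v_pol P r \<gamma> p x" for x
  have Ppol_le: "\<gamma> * Ppol P p' d x \<le> d x" if x: "x \<in> space S" for x
  proof -
    have "\<gamma> * Ppol P p' d x = q_pol P r \<gamma> p' x (p' x) - q_pol P r \<gamma> p x (p' x)"
      unfolding Ppol_def d_def q_pol_diff[OF p' p x] ..
    then show ?thesis
      using improving[OF x] v_pol_eq_q_pol[OF p' x] by (simp add: d_def)
  qed
  have "0 \<le> d s"
    using v_pol_measurable[OF p] v_pol_measurable[OF p'] v_pol_diff_bounds[OF p' p]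
    by (intro nonneg_if_discounted_Ppol_le[OF _ _ Ppol_le s]) (auto simp: d_def[abs_def])
  then show ?thesis by (simp add: d_def)
qed

corollary q_pol_le_v_pol_of_improving:
  assumes p: "p \<in> stationary_policies S" and p': "p' \<in> stationary_policies S"
    and improving: "\<And>x. x \<in> space S \<Longrightarrow> v_pol P r \<gamma> p x \<le> q_pol P r \<gamma> p x (p' x)"
    and s: "s \<in> space S"
  shows "q_pol P r \<gamma> p s (p' s) \<le> v_pol P r \<gamma> p' s"
proof -
  have "0 \<le> integral\<^sup>L (P s (p' s)) (\<lambda>x. v_pol P r \<gamma> p' x - v_pol P r \<gamma> p x)"
    using integral_P_bounds[OF s _ , of "\<lambda>x. v_pol P r \<gamma> p' x - v_pol P r \<gamma> p x" 0 "1 / (1 - \<gamma>)"]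
      v_pol_measurable[OF p] v_pol_measurable[OF p'] v_pol_diff_bounds[OF p' p]
      policy_improvement[OF p p' improving] by auto
  then have "0 \<le> q_pol P r \<gamma> p' s (p' s) - q_pol P r \<gamma> p s (p' s)"
    unfolding q_pol_diff[OF p' p s] using gamma_pos by simp
  then show ?thesis using v_pol_eq_q_pol[OF p' s] by simp
qed

lemma v_star_le_q_pol_of_next_state_optimal:
  assumes p_opt: "p_opt \<in> stationary_policies S"
    and v_star_eq: "\<And>x. x \<in> space S \<Longrightarrow> v_star S P r \<gamma> x = v_pol P r \<gamma> p_opt x"
    and p: "p \<in> stationary_policies S"
    and next_state_optimal: "next_state_delta_optimal_on S P r \<gamma> p \<Delta> S'"
    and s: "s \<in> S'" "s \<in> space S"
  shows "v_star S P r \<gamma> s \<le> q_pol P r \<gamma> p s (p_opt s) + \<gamma> * \<Delta>"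
proof -
  have "integral\<^sup>L (P s (p_opt s)) (\<lambda>x. v_pol P r \<gamma> p_opt x - v_pol P r \<gamma> p x)
      = integral\<^sup>L (P s (p_opt s)) (\<lambda>x. v_star S P r \<gamma> x - v_pol P r \<gamma> p x)"
    by (rule Bochner_Integration.integral_cong) (auto simp: space_P[OF s(2)] v_star_eq)
  also have "\<dots> \<le> \<Delta>"
    using next_state_optimal s unfolding next_state_delta_optimal_on_def by blast
  finally have "q_pol P r \<gamma> p_opt s (p_opt s) - q_pol P r \<gamma> p s (p_opt s) \<le> \<gamma> * \<Delta>"
    unfolding q_pol_diff[OF p_opt p s(2)] using gamma_pos by simp
  then show ?thesis
    using v_pol_eq_q_pol[OF p_opt s(2)] v_star_eq[OF s(2)] by simp
qed

end

lemma Max_range_attained: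
  fixes f :: "'a::finite \<Rightarrow> 'b::linorder"
  shows "\<exists>a. f a = Max (range f)"
proof -
  have "Max (range f) \<in> range f" by (rule Max_in) auto
  then show ?thesis by (metis rangeE)
qed

lemma capi_update_cases:
  fixes qh :: "'s \<Rightarrow> 'a::{finite,linorder} \<Rightarrow> real"
  obtains (keep) "capi_update qh p Sfix \<omega> s = p s"
      "s \<notin> Sfix \<Longrightarrow> Max (range (qh s)) - 2 * \<omega> \<le> qh s (p s)"
  | (greedy) "s \<notin> Sfix" "qh s (p s) + \<omega> < Max (range (qh s)) - \<omega>"
      "qh s (capi_update qh p Sfix \<omega> s) = Max (range (qh s))"
  using LeastI_finite[OF Max_range_attained[of "qh s"]]
  unfolding capi_update_def by (cases "s \<notin> Sfix \<and> qh s (p s) + \<omega> < Max (range (qh s)) - \<omega>") auto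

lemma capi_update_not_worse:
  fixes qh :: "'s \<Rightarrow> 'a::{finite,linorder} \<Rightarrow> real" and q :: "'a \<Rightarrow> real"
  assumes approx: "s \<notin> Sfix \<Longrightarrow> \<forall>a. \<bar>qh s a - q a\<bar> \<le> \<omega>"
  shows "q (p s) \<le> q (capi_update qh p Sfix \<omega> s)"
proof (cases rule: capi_update_cases[of qh p Sfix \<omega> s])
  case greedy
  with approx[rule_format, of "p s"] approx[rule_format, of "capi_update qh p Sfix \<omega> s"]
  show ?thesis by linarith
qed simp

lemma capi_update_near_optimal:
  fixes qh :: "'s \<Rightarrow> 'a::{finite,linorder} \<Rightarrow> real" and q :: "'a \<Rightarrow> real"
  assumes s: "s \<notin> Sfix" and approx: "\<forall>a. \<bar>qh s a - q a\<bar> \<le> \<omega>"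
  shows "q a - 4 * \<omega> \<le> q (capi_update qh p Sfix \<omega> s)"
proof -
  have max: "qh s a \<le> Max (range (qh s))" by (rule Max_ge) auto
  note approx_at = approx[rule_format, of a] approx[rule_format, of "p s"]
    approx[rule_format, of "capi_update qh p Sfix \<omega> s"]
  show ?thesis
  proof (cases rule: capi_update_cases[of qh p Sfix \<omega> s])
    case keep
    with s have "Max (range (qh s)) - 2 * \<omega> \<le> qh s (p s)" by blast
    with max approx_at show ?thesis unfolding keep(1) abs_le_iff by linarith
  next
    case greedy
    with max approx_at show ?thesis unfolding abs_le_iff by linarith
  qed
qed

lemma capi_update_measurable:
  fixes qh :: "'s \<Rightarrow> 'a::{finite,linorder} \<Rightarrow> real"
  assumes qh: "\<And>a. (\<lambda>s. qh s a) \<in> borel_measurable S"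
    and p: "p \<in> stationary_policies S" and Sfix: "Sfix \<in> sets S"
  shows "capi_update qh p Sfix \<omega> \<in> stationary_policies S"
proof -
  have Max_measurable[measurable]: "(\<lambda>s. Max (range (qh s))) \<in> borel_measurable S"
    using borel_measurable_Max[of UNIV "\<lambda>a s. qh s a" S] qh by (simp add: image_def)
  have qh_p_measurable[measurable]: "(\<lambda>s. qh s (p s)) \<in> borel_measurable S"
    using p unfolding stationary_policies_def
    by (rule measurable_compose_countable[where f="\<lambda>a s. qh s a", OF qh])
  have "(\<lambda>s. LEAST a. qh s a = Max (range (qh s))) \<in> S \<rightarrow>\<^sub>M count_space UNIV"
  proof (rule measurable_Least_finite)
    show "Measurable.pred S (\<lambda>s. qh s a = Max (range (qh s)))" for a
      using qh[of a] by measurable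
  qed (rule Max_range_attained)
  moreover have "{s \<in> space S. s \<notin> Sfix \<and> qh s (p s) + \<omega> < Max (range (qh s)) - \<omega>} \<in> sets S"
    using Sfix by measurable
  ultimately show ?thesis
    using p unfolding stationary_policies_def capi_update_def[abs_def]
    by (intro measurable_If) auto
qed

theorem lemma3p4:
  fixes S :: "'s measure"
    and P :: "'s \<Rightarrow> 'a::{finite,linorder} \<Rightarrow> 's measure"
    and r :: "'s \<Rightarrow> 'a \<Rightarrow> real"
    and \<gamma> \<omega> \<Delta> :: real
    and p :: "'s \<Rightarrow> 'a"
    and qh :: "'s \<Rightarrow> 'a \<Rightarrow> real"
    and Sfix :: "'s set"
  assumes kernel: "\<And>a. (\<lambda>s. P s a) \<in> S \<rightarrow>\<^sub>M prob_algebra S"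
    and r_meas: "\<And>a. (\<lambda>s. r s a) \<in> borel_measurable S"
    and r_bounds: "\<And>s a. 0 \<le> r s a \<and> r s a \<le> 1"
    and gamma: "0 < \<gamma>" "\<gamma> < 1"
    and v_star_attained: "\<exists>pstar\<in>stationary_policies S.
                            \<forall>s\<in>space S. v_star S P r \<gamma> s = v_pol P r \<gamma> pstar s"
    and pi_pol: "p \<in> stationary_policies S"
    and qh_meas: "\<And>a. (\<lambda>s. qh s a) \<in> borel_measurable S"
    and Sfix: "Sfix \<in> sets S"
    and omega: "\<omega> > 0"
    and Delta: "\<Delta> \<ge> 0"
    and approx: "\<forall>s\<in>space S - Sfix. \<forall>a. \<bar>qh s a - q_pol P r \<gamma> p s a\<bar> \<le> \<omega>"
    and nso: "next_state_delta_optimal_on S P r \<gamma> p \<Delta> (space S - Sfix)"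
  shows "delta_optimal_on S P r \<gamma> (capi_update qh p Sfix \<omega>) (4 * \<omega> + \<gamma> * \<Delta>) (space S - Sfix)"
proof -
  interpret discounted_mdp S P r \<gamma> using kernel r_meas r_bounds gamma by unfold_locales auto
  define p' where "p' = capi_update qh p Sfix \<omega>"
  have p': "p' \<in> stationary_policies S"
    unfolding p'_def using qh_meas pi_pol Sfix by (rule capi_update_measurable)
  obtain p_opt where p_opt: "p_opt \<in> stationary_policies S"
    and v_star_eq: "\<And>s. s \<in> space S \<Longrightarrow> v_star S P r \<gamma> s = v_pol P r \<gamma> p_opt s"
    using v_star_attained by blast
  have improving: "v_pol P r \<gamma> p x \<le> q_pol P r \<gamma> p x (p' x)" if x: "x \<in> space S" for x
    unfolding v_pol_eq_q_pol[OF pi_pol x] p'_def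
    by (rule capi_update_not_worse) (use approx x in blast)
  show ?thesis
    unfolding delta_optimal_on_def p'_def[symmetric]
  proof
    fix s assume s: "s \<in> space S - Sfix"
    then have s_space: "s \<in> space S" by simp
    have "v_star S P r \<gamma> s \<le> q_pol P r \<gamma> p s (p_opt s) + \<gamma> * \<Delta>"
      using v_star_le_q_pol_of_next_state_optimal[OF p_opt v_star_eq pi_pol nso s s_space] .
    also have "q_pol P r \<gamma> p s (p_opt s) \<le> q_pol P r \<gamma> p s (p' s) + 4 * \<omega>"
      unfolding p'_def using capi_update_near_optimal[of s Sfix qh "q_pol P r \<gamma> p s" \<omega> "p_opt s" p] s approx
      by auto
    also have "q_pol P r \<gamma> p s (p' s) \<le> v_pol P r \<gamma> p' s"
      by (rule q_pol_le_v_pol_of_improving[OF pi_pol p' improving s_space])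
    finally show "v_star S P r \<gamma> s - v_pol P r \<gamma> p' s \<le> 4 * \<omega> + \<gamma> * \<Delta>" by simp
  qed
qed

end
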